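(* For every integer $d\geq2$, $R_{2,d}(W_2\otimes W_d)=2d$.
   Context: Identify $S^d\mathbb{C}^2$ with binary forms of degree $d$ in a basis $\{x,y\}$; $W_d=x^{d-1}y$. The partially symmetric rank $R_{2,d}(T)$ of $T\in S^2\mathbb{C}^2\otimes S^d\mathbb{C}^2$ is the minimal $r$ with $T=\sum_{i=1}^r v_{i,1}^{\otimes 2}\otimes v_{i,2}^{\otimes d}$, $v_{i,j}\in\mathbb{C}^2$. *)

theory Defs
  imports Complex_Main
begin

text \<open>Binary forms: a vector v = (a,b) in C^2 gives the linear form a*x + b*y;
  v^{tensor d} in S^d C^2 is identified with the binary form (a*x+b*y)^d.
  An element of S^a C^2 (x) S^b C^2 is identified with a bihomogeneous form
  F(x,y,x',y') of bidegree (a,b), represented by its polynomial function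
  (over the infinite field C this determines the polynomial).\<close>

definition linf :: "complex \<times> complex \<Rightarrow> complex \<Rightarrow> complex \<Rightarrow> complex" where
  "linf v x y = fst v * x + snd v * y"

definition W :: "nat \<Rightarrow> complex \<Rightarrow> complex \<Rightarrow> complex" where
  "W d x y = x ^ (d - 1) * y"

definition psrank :: "nat \<Rightarrow> nat \<Rightarrow>
    (complex \<Rightarrow> complex \<Rightarrow> complex \<Rightarrow> complex \<Rightarrow> complex) \<Rightarrow> nat" where
  "psrank a b T = (LEAST r. \<exists>v1 v2 :: nat \<Rightarrow> complex \<times> complex.
     \<forall>x y x' y'. T x y x' y' = (\<Sum>i<r. linf (v1 i) x y ^ a * linf (v2 i) x' y' ^ b))"

end

theory Submission
  imports Defs "HOL-Analysis.Complex_Transcendental"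
begin

text \<open>Upper bound: x y is a sum of two squares of linear forms, and for a primitive d-th root
  of unity w we have d^2 x^(d-1) y = sum_{k<d} w^((d-1)k) (x + w^k y)^d, because averaging over
  the roots of unity kills every binomial term except the one of index 1. Multiplying out gives
  2d terms.

  Lower bound: let x y x'^(d-1) y' = sum_{i<r} (a_i x + b_i y)^2 (u_i x' + v_i y')^d.
  Specialising x and y shows that the moments sum_i a_i^2 u_i^(d-k) v_i^k and
  sum_i b_i^2 u_i^(d-k) v_i^k vanish, while sum_i a_i b_i u_i^(d-k) v_i^k is nonzero only for k = 1.
  These identities make the 2d vectors (a_i u_i^(d-1-m) v_i^m)_i and (b_i u_i^(d-1-m) v_i^m)_i,
  m < d, of C^r linearly independent: pairing a vanishing combination of them with (b_i u_i),
  (b_i v_i), (a_i u_i) and (a_i v_i) kills its coefficients of index 0 and 1, and the vanishing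
  combinations are stable under shifting the coefficients down by one. Hence r \<ge> 2d.\<close>

lemma homogeneous_system_nontrivial_solution:
  fixes A :: "nat \<Rightarrow> 'a \<Rightarrow> 'b::field"
  assumes "finite J" "n < card J"
  shows "\<exists>x. (\<exists>j\<in>J. x j \<noteq> 0) \<and> (\<forall>i<n. (\<Sum>j\<in>J. A i j * x j) = 0)"
  using assms
proof (induction n arbitrary: A J)
  case 0
  then obtain j where "j \<in> J" by fastforce
  then show ?case by (intro exI[of _ "\<lambda>_. 1"]) auto
next
  case (Suc n)
  show ?case
  proof (cases "\<forall>j\<in>J. A n j = 0")
    case True
    with Suc.IH[of J A] Suc.prems show ?thesis by (auto simp: less_Suc_eq)
  next
    case False
    then obtain j0 where j0: "j0 \<in> J" "A n j0 \<noteq> 0" by auto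
    define J' where "J' = J - {j0}"
    define B where "B i j = A i j - A i j0 * A n j / A n j0" for i j
    have "finite J'" "n < card J'" using Suc.prems j0 by (auto simp: J'_def)
    from Suc.IH[OF this, of B] obtain x where
      x: "\<exists>j\<in>J'. x j \<noteq> 0" "\<forall>i<n. (\<Sum>j\<in>J'. B i j * x j) = 0" by auto
    define S where "S = (\<Sum>j\<in>J'. A n j * x j)"
    define x' where "x' = x(j0 := - S / A n j0)"
    have split: "(\<Sum>j\<in>J. A i j * x' j) = A i j0 * x' j0 + (\<Sum>j\<in>J'. A i j * x j)" for i
    proof -
      have "(\<Sum>j\<in>J'. A i j * x' j) = (\<Sum>j\<in>J'. A i j * x j)"
        by (rule sum.cong) (auto simp: x'_def J'_def)
      then show ?thesis using Suc.prems j0 by (simp add: J'_def sum.remove)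
    qed
    have "(\<Sum>j\<in>J. A i j * x' j) = 0" if "i < Suc n" for i
    proof (cases "i = n")
      case True
      then show ?thesis using split[of n] j0 by (simp add: x'_def S_def)
    next
      case False
      have "(\<Sum>j\<in>J'. B i j * x j) = (\<Sum>j\<in>J'. A i j * x j) - A i j0 / A n j0 * S"
        by (simp add: B_def S_def algebra_simps sum_subtractf sum_distrib_left sum_divide_distrib)
      moreover have "(\<Sum>j\<in>J'. B i j * x j) = 0" using x that False by auto
      ultimately show ?thesis using split[of i] j0 by (simp add: x'_def field_simps)
    qed
    moreover have "\<exists>j\<in>J. x' j \<noteq> 0" using x by (auto simp: x'_def J'_def)
    ultimately show ?thesis by blast
  qed
qed

lemma sum_power_affine_expand:
  fixes c u v :: "nat \<Rightarrow> 'a::comm_semiring_1"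
  shows "(\<Sum>i<r. c i * (u i + v i * t)^d) =
         (\<Sum>k\<le>d. (of_nat (d choose k) * (\<Sum>i<r. c i * u i^(d-k) * v i^k)) * t^k)"
proof -
  have "(\<Sum>i<r. c i * (u i + v i * t)^d) =
        (\<Sum>i<r. \<Sum>k\<le>d. (of_nat (d choose k) * (c i * u i^(d-k) * v i^k)) * t^k)"
  proof (rule sum.cong[OF refl])
    fix i
    have "(u i + v i * t)^d = (\<Sum>k\<le>d. of_nat (d choose k) * (v i * t)^k * u i^(d-k))"
      by (subst add.commute) (rule binomial_ring)
    then show "c i * (u i + v i * t)^d =
        (\<Sum>k\<le>d. (of_nat (d choose k) * (c i * u i^(d-k) * v i^k)) * t^k)"
      by (simp add: sum_distrib_left power_mult_distrib mult_ac)
  qed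
  also have "\<dots> = (\<Sum>k\<le>d. \<Sum>i<r. (of_nat (d choose k) * (c i * u i^(d-k) * v i^k)) * t^k)"
    by (rule sum.swap)
  finally show ?thesis by (simp add: sum_distrib_left sum_distrib_right)
qed

lemma sum_power_affine_coeff:
  fixes c u v e :: "nat \<Rightarrow> 'a::{idom,real_normed_div_algebra}"
  assumes "\<And>t. (\<Sum>i<r. c i * (u i + v i * t)^d) = (\<Sum>k\<le>d. e k * t^k)" "k \<le> d"
  shows "of_nat (d choose k) * (\<Sum>i<r. c i * u i^(d-k) * v i^k) = e k"
  using assms polyfun_eq_coeffs[where n = d and d = e
      and c = "\<lambda>k. of_nat (d choose k) * (\<Sum>i<r. c i * u i^(d-k) * v i^k)"]
  by (simp add: sum_power_affine_expand)

locale W2_Wd_decomposition =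
  fixes d r :: nat and a b u v :: "nat \<Rightarrow> complex"
  assumes d_ge_2: "2 \<le> d"
    and decomposition: "\<And>x y x' y'. x * y * (x' ^ (d - 1) * y') =
      (\<Sum>i<r. (a i * x + b i * y)^2 * (u i * x' + v i * y')^d)"
begin

definition moment :: "(nat \<Rightarrow> complex) \<Rightarrow> nat \<Rightarrow> complex" where
  "moment g k = (\<Sum>i<r. g i * u i^(d-k) * v i^k)"

lemma sum_a_squared_vanishes: "(\<Sum>i<r. (a i)^2 * (u i + v i * t)^d) = 0"
  using decomposition[of 1 0 1 t] by simp

lemma sum_b_squared_vanishes: "(\<Sum>i<r. (b i)^2 * (u i + v i * t)^d) = 0"
  using decomposition[of 0 1 1 t] by simp

lemma sum_ab_eq_linear: "(\<Sum>i<r. (2 * a i * b i) * (u i + v i * t)^d) = t"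
proof -
  let ?X = "\<lambda>i. (u i + v i * t)^d"
  have "t = (\<Sum>i<r. (a i + b i)^2 * ?X i)" using decomposition[of 1 1 1 t] by simp
  also have "\<dots> = (\<Sum>i<r. (a i)^2 * ?X i) + (\<Sum>i<r. (2 * a i * b i) * ?X i) + (\<Sum>i<r. (b i)^2 * ?X i)"
    by (simp add: sum.distrib[symmetric] power2_sum algebra_simps)
  finally show ?thesis using sum_a_squared_vanishes sum_b_squared_vanishes by simp
qed

lemma moment_vanishes_if_sum_vanishes:
  assumes "\<And>t. (\<Sum>i<r. g i * (u i + v i * t)^d) = 0" "k \<le> d"
  shows "moment g k = 0"
proof -
  have "of_nat (d choose k) * (\<Sum>i<r. g i * u i^(d-k) * v i^k) = 0"
    by (rule sum_power_affine_coeff[where e = "\<lambda>_. 0"]) (use assms in simp_all)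
  then show ?thesis using assms(2) by (simp add: moment_def)
qed

lemma moment_aa: "k \<le> d \<Longrightarrow> moment (\<lambda>i. (a i)^2) k = 0"
  by (rule moment_vanishes_if_sum_vanishes[OF sum_a_squared_vanishes])

lemma moment_bb: "k \<le> d \<Longrightarrow> moment (\<lambda>i. (b i)^2) k = 0"
  by (rule moment_vanishes_if_sum_vanishes[OF sum_b_squared_vanishes])

lemma moment_ab:
  assumes k: "k \<le> d"
  shows "moment (\<lambda>i. a i * b i) k = (if k = 1 then 1 / (2 * of_nat d) else 0)"
proof -
  have "(\<Sum>j\<le>d. (if j = 1 then 1 else 0) * t^j) = t" for t :: complex
  proof -
    have "(\<Sum>j\<le>d. (if j = 1 then 1 else 0) * t^j) = (\<Sum>j\<le>d. if j = 1 then t^j else 0)"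
      by (rule sum.cong) auto
    then show ?thesis using d_ge_2 by simp
  qed
  then have "of_nat (d choose k) * (\<Sum>i<r. (2 * a i * b i) * u i^(d-k) * v i^k) =
      (if k = 1 then 1 else 0)"
    by (intro sum_power_affine_coeff k) (simp add: sum_ab_eq_linear)
  moreover have "(\<Sum>i<r. (2 * a i * b i) * u i^(d-k) * v i^k) = 2 * moment (\<lambda>i. a i * b i) k"
    by (simp add: moment_def sum_distrib_left mult_ac)
  ultimately show ?thesis using k d_ge_2 by (auto simp: field_simps)
qed

definition comb :: "(nat \<Rightarrow> complex) \<Rightarrow> (nat \<Rightarrow> complex) \<Rightarrow> nat \<Rightarrow> complex" where
  "comb p q i = (\<Sum>m<d. (a i * p m + b i * q m) * u i^(d-1-m) * v i^m)"

lemma comb_pairing: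
  assumes "j \<le> 1"
  shows "(\<Sum>i<r. comb p q i * (g i * u i^(1-j) * v i^j)) =
    (\<Sum>m<d. p m * moment (\<lambda>i. a i * g i) (m+j) + q m * moment (\<lambda>i. b i * g i) (m+j))"
proof -
  let ?term = "\<lambda>i m. p m * (a i * g i * u i^(d-(m+j)) * v i^(m+j))
                   + q m * (b i * g i * u i^(d-(m+j)) * v i^(m+j))"
  have "comb p q i * (g i * u i^(1-j) * v i^j) = (\<Sum>m<d. ?term i m)" for i
    unfolding comb_def sum_distrib_right
  proof (rule sum.cong[OF refl])
    fix m assume "m \<in> {..<d}"
    then have "d - (m + j) = (d - 1 - m) + (1 - j)" using assms by auto
    then show "(a i * p m + b i * q m) * u i^(d-1-m) * v i^m * (g i * u i^(1-j) * v i^j) = ?term i m"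
      by (simp add: power_add algebra_simps)
  qed
  then have "(\<Sum>i<r. comb p q i * (g i * u i^(1-j) * v i^j)) = (\<Sum>m<d. \<Sum>i<r. ?term i m)"
    by (simp add: sum.swap[of _ "{..<d}"])
  also have "\<dots> = (\<Sum>m<d. p m * moment (\<lambda>i. a i * g i) (m+j) + q m * moment (\<lambda>i. b i * g i) (m+j))"
    by (simp add: moment_def sum.distrib sum_distrib_left)
  finally show ?thesis .
qed

lemma comb_kernel_low_coeffs:
  assumes kernel: "\<forall>i<r. comb p q i = 0" and j: "j \<le> 1"
  shows "p (1-j) = 0 \<and> q (1-j) = 0"
proof -
  have collapse: "(\<Sum>m<d. s m * moment (\<lambda>i. a i * b i) (m+j) + t m * moment h (m+j)) =
      s (1-j) / (2 * of_nat d)" if "\<And>k. k \<le> d \<Longrightarrow> moment h k = 0" for s t h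
  proof -
    have "(\<Sum>m<d. s m * moment (\<lambda>i. a i * b i) (m+j) + t m * moment h (m+j)) =
        (\<Sum>m<d. if m = 1 - j then s m / (2 * of_nat d) else 0)"
      by (rule sum.cong) (use that j in \<open>auto simp: moment_ab\<close>)
    then show ?thesis using d_ge_2 by simp
  qed
  have "0 = (\<Sum>i<r. comb p q i * (b i * u i^(1-j) * v i^j))" using kernel by simp
  also have "\<dots> = p (1-j) / (2 * of_nat d)"
    unfolding comb_pairing[OF j]
    using collapse[of "\<lambda>i. (b i)^2" p q] moment_bb by (simp add: power2_eq_square)
  finally have p: "p (1-j) = 0" using d_ge_2 by simp
  have "0 = (\<Sum>i<r. comb p q i * (a i * u i^(1-j) * v i^j))" using kernel by simp
  also have "\<dots> = q (1-j) / (2 * of_nat d)"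
    unfolding comb_pairing[OF j]
    using collapse[of "\<lambda>i. (a i)^2" q p] moment_aa
    by (simp add: power2_eq_square mult.commute[of "b _"] add.commute)
  finally have "q (1-j) = 0" using d_ge_2 by simp
  with p show ?thesis ..
qed

lemma comb_kernel_shift:
  assumes kernel: "\<forall>i<r. comb p q i = 0" and support: "\<forall>m\<ge>d. p m = 0 \<and> q m = 0"
  shows "\<forall>i<r. comb (\<lambda>m. p (Suc m)) (\<lambda>m. q (Suc m)) i = 0"
proof (intro allI impI)
  fix i assume i: "i < r"
  obtain d' where d': "d = Suc d'" using d_ge_2 by (cases d) auto
  define c where "c m = a i * p m + b i * q m" for m
  have comb_c: "comb p q i = (\<Sum>m<d. c m * u i^(d-1-m) * v i^m)" by (simp add: comb_def c_def)
  have comb_shift_c: "comb (\<lambda>m. p (Suc m)) (\<lambda>m. q (Suc m)) i = (\<Sum>m<d. c (Suc m) * u i^(d-1-m) * v i^m)"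
    by (simp add: comb_def c_def)
  have c0: "c 0 = 0" "c 1 = 0" "c d = 0"
    using comb_kernel_low_coeffs[OF kernel, of 0] comb_kernel_low_coeffs[OF kernel, of 1] support
    by (auto simp: c_def)
  show "comb (\<lambda>m. p (Suc m)) (\<lambda>m. q (Suc m)) i = 0"
  proof (cases "v i = 0")
    case True
    then have "comb (\<lambda>m. p (Suc m)) (\<lambda>m. q (Suc m)) i = c 1 * u i^(d-1)"
      unfolding comb_shift_c unfolding d' by (subst sum.lessThan_Suc_shift) simp
    then show ?thesis using c0 by simp
  next
    case False
    \<comment> \<open>since c 0 = c d = 0, multiplying by v i shifts the sum, giving u i * comb p q i\<close>
    have "v i * comb (\<lambda>m. p (Suc m)) (\<lambda>m. q (Suc m)) i = (\<Sum>m<d'. c (Suc m) * u i^(d'-m) * v i^(Suc m))"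
      using c0(3) unfolding comb_shift_c unfolding d' by (simp add: sum_distrib_left mult_ac)
    also have "\<dots> = (\<Sum>m<Suc d'. c m * u i^(Suc d' - m) * v i^m)"
      using c0(1) by (subst sum.lessThan_Suc_shift) simp
    also have "\<dots> = u i * comb p q i"
      unfolding comb_c unfolding d' sum_distrib_left
      by (rule sum.cong) (auto simp: Suc_diff_le mult_ac)
    finally show ?thesis using kernel i False by simp
  qed
qed

lemma comb_kernel_trivial:
  assumes "\<forall>i<r. comb p q i = 0" "\<forall>m\<ge>d. p m = 0 \<and> q m = 0"
  shows "p n = 0 \<and> q n = 0"
  using assms
proof (induction n arbitrary: p q)
  case 0
  then show ?case using comb_kernel_low_coeffs[of p q 1] by simp
next
  case (Suc n)
  then show ?case
    using Suc.IH[of "\<lambda>m. p (Suc m)" "\<lambda>m. q (Suc m)"] comb_kernel_shift by auto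
qed

lemma length_ge: "2 * d \<le> r"
proof (rule ccontr)
  let ?J = "{..<d} \<times> (UNIV :: bool set)"
  assume "\<not> 2 * d \<le> r"
  then have "r < card ?J" by (simp add: card_cartesian_product)
  then obtain x where x: "\<exists>j\<in>?J. x j \<noteq> 0"
    "\<forall>i<r. (\<Sum>j\<in>?J. (if snd j then a i else b i) * u i^(d-1-fst j) * v i^fst j * x j) = 0"
    using homogeneous_system_nontrivial_solution[of ?J r
        "\<lambda>i j. (if snd j then a i else b i) * u i^(d-1-fst j) * v i^fst j"] by auto
  define p where "p m = (if m < d then x (m, True) else 0)" for m
  define q where "q m = (if m < d then x (m, False) else 0)" for m
  have "comb p q i = (\<Sum>j\<in>?J. (if snd j then a i else b i) * u i^(d-1-fst j) * v i^fst j * x j)" for i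
  proof -
    have "(\<Sum>j\<in>?J. (if snd j then a i else b i) * u i^(d-1-fst j) * v i^fst j * x j) =
        (\<Sum>m<d. \<Sum>e\<in>UNIV. (if e then a i else b i) * u i^(d-1-m) * v i^m * x (m, e))"
      by (simp add: sum.cartesian_product prod.case_eq_if)
    then show ?thesis by (simp add: comb_def p_def q_def UNIV_bool algebra_simps)
  qed
  then have pq_zero: "p n = 0 \<and> q n = 0" for n
    using comb_kernel_trivial[of p q] x(2) by (simp add: p_def q_def)
  have "x (m, e) = 0" if "m < d" for m e
    using that pq_zero[of m] by (cases e) (auto simp: p_def q_def)
  then show False using x(1) by auto
qed

end

lemma sum_powers_root_of_unity:
  fixes w :: "'a::field"
  assumes "w ^ n = 1"
  shows "(\<Sum>k<n. w^k) = (if w = 1 then of_nat n else 0)"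
  using assms by (simp add: geometric_sum)

lemma sum_powers_primitive_root:
  assumes "1 \<le> d"
  shows "(\<Sum>k<d. (exp (2 * of_real pi * \<i> / of_nat d) ^ m) ^ k) = (if d dvd m then of_nat d else 0)"
proof -
  have "exp (2 * of_real pi * \<i> / of_nat d) ^ m = exp (2 * of_real pi * \<i> * of_nat m / of_nat d)"
    by (simp add: exp_of_nat_mult[symmetric] mult_ac)
  then show ?thesis
    using sum_powers_root_of_unity[OF complex_root_unity[of d m]] complex_root_unity_eq_1[OF assms, of m] assms
    by simp
qed

lemma dvd_add_pred_imp_eq_1:
  fixes d j :: nat
  assumes "2 \<le> d" "j \<le> d" "d dvd j + d - 1"
  shows "j = 1"
proof (cases j)
  case 0
  then have "d dvd d - 1" using assms by simp
  then show ?thesis using assms(1) nat_dvd_not_less[of "d - 1" d] by simp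
next
  case (Suc j')
  then have "d dvd j'" using assms by (simp add: add.commute)
  then show ?thesis using Suc assms nat_dvd_not_less[of j' d] by (cases j') auto
qed

lemma Waring_decomposition_W:
  fixes x y :: complex
  assumes d: "2 \<le> d"
  defines "w \<equiv> exp (2 * of_real pi * \<i> / of_nat d)"
  shows "(\<Sum>k<d. w^((d-1)*k) * (x + w^k * y)^d) = (of_nat d)^2 * (x^(d-1) * y)"
proof -
  have "w^((d-1)*k) * (x + w^k * y)^d =
      (\<Sum>j\<le>d. of_nat (d choose j) * y^j * x^(d-j) * (w^(j+d-1))^k)" for k
  proof -
    have "(x + w^k * y)^d = (\<Sum>j\<le>d. of_nat (d choose j) * (w^k * y)^j * x^(d-j))"
      by (subst add.commute) (rule binomial_ring)
    moreover have "w^((d-1)*k) * (w^k)^j = (w^(j+d-1))^k" for j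
      using d by (simp add: power_mult[symmetric] power_add[symmetric] algebra_simps)
    ultimately show ?thesis
      by (simp add: sum_distrib_left power_mult_distrib mult_ac)
  qed
  then have "(\<Sum>k<d. w^((d-1)*k) * (x + w^k * y)^d) =
      (\<Sum>j\<le>d. of_nat (d choose j) * y^j * x^(d-j) * (\<Sum>k<d. (w^(j+d-1))^k))"
    by (simp add: sum.swap[of _ "{..<d}"] sum_distrib_left)
  also have "\<dots> = (\<Sum>j\<le>d. if j = 1 then of_nat d * y * x^(d-1) * of_nat d else 0)"
    using d dvd_add_pred_imp_eq_1[OF d]
    by (intro sum.cong) (auto simp: w_def sum_powers_primitive_root)
  also have "\<dots> = (of_nat d)^2 * (x^(d-1) * y)"
    using d by (simp add: power2_eq_square mult_ac)
  finally show ?thesis .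
qed

lemma sum_lessThan_double_in_pairs: "(\<Sum>i<2*(n::nat). f i) = (\<Sum>k<n. f (2*k) + f (2*k+1))"
  by (induction n) (simp_all add: add.assoc)

lemma product_sum_of_squares:
  fixes s x y :: complex
  shows "(s * x / 2 + s * y / 2)^2 + (\<i> * s * x / 2 - \<i> * s * y / 2)^2 = s^2 * (x * y)"
  by (simp add: power2_eq_square algebra_simps)

lemma W2_Wd_decomposition_of_length_2d:
  assumes d: "2 \<le> d"
  shows "\<exists>v1 v2 :: nat \<Rightarrow> complex \<times> complex. \<forall>x y x' y'.
    W 2 x y * W d x' y' = (\<Sum>i<2*d. linf (v1 i) x y ^ 2 * linf (v2 i) x' y' ^ d)"
proof -
  define w where "w = exp (2 * of_real pi * \<i> / of_nat d)"
  define s where "s k = csqrt (w^((d-1)*k) / (of_nat d)^2)" for k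
  define v1 where "v1 i = (if even i then (s (i div 2) / 2, s (i div 2) / 2)
                          else (\<i> * s (i div 2) / 2, - \<i> * s (i div 2) / 2))" for i :: nat
  define v2 where "v2 i = ((1::complex), w^(i div 2))" for i :: nat
  have "W 2 x y * W d x' y' = (\<Sum>i<2*d. linf (v1 i) x y ^ 2 * linf (v2 i) x' y' ^ d)"
    for x y x' y' :: complex
  proof -
    have "(\<Sum>i<2*d. linf (v1 i) x y ^ 2 * linf (v2 i) x' y' ^ d) =
        (\<Sum>k<d. (s k)^2 * (x * y) * (x' + w^k * y')^d)"
      by (simp add: sum_lessThan_double_in_pairs v1_def v2_def linf_def product_sum_of_squares
          flip: distrib_right)
    also have "\<dots> = (x * y) / (of_nat d)^2 * (\<Sum>k<d. w^((d-1)*k) * (x' + w^k * y')^d)"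
      by (simp add: s_def sum_distrib_left mult_ac)
    also have "\<dots> = W 2 x y * W d x' y'"
      using Waring_decomposition_W[OF d, of x' y'] d by (simp add: w_def W_def)
    finally show ?thesis by simp
  qed
  then show ?thesis by blast
qed

theorem proposition4p4:
  fixes d :: nat
  assumes "d \<ge> 2"
  shows "psrank 2 d (\<lambda>x y x' y'. W 2 x y * W d x' y') = 2 * d"
  unfolding psrank_def
proof (rule Least_equality)
  show "\<exists>v1 v2 :: nat \<Rightarrow> complex \<times> complex. \<forall>x y x' y'.
      W 2 x y * W d x' y' = (\<Sum>i<2*d. linf (v1 i) x y ^ 2 * linf (v2 i) x' y' ^ d)"
    using W2_Wd_decomposition_of_length_2d[OF assms] .
next
  fix r
  assume "\<exists>v1 v2 :: nat \<Rightarrow> complex \<times> complex. \<forall>x y x' y'.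
      W 2 x y * W d x' y' = (\<Sum>i<r. linf (v1 i) x y ^ 2 * linf (v2 i) x' y' ^ d)"
  then obtain v1 v2 :: "nat \<Rightarrow> complex \<times> complex" where
    "\<And>x y x' y'. W 2 x y * W d x' y' = (\<Sum>i<r. linf (v1 i) x y ^ 2 * linf (v2 i) x' y' ^ d)"
    by blast
  then interpret W2_Wd_decomposition d r "fst \<circ> v1" "snd \<circ> v1" "fst \<circ> v2" "snd \<circ> v2"
    using assms by unfold_locales (simp_all add: W_def linf_def)
  show "2 * d \<le> r" by (rule length_ge)
qed

end
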